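(* Let $f:[x_i,\infty)\to\mathbb{R}^+$ be a probability density function such that $f(x)\sim Cx^{-\eta}$ as $x\to\infty$, for some $\eta>1$ and $C>0$, and set $\alpha_c=2+\frac1{\eta-1}>2$. Then for every $\alpha\in(2,\alpha_c)$ the transformed density $\mathcal{U}_\alpha[f]$ has unbounded support and $$\mathcal{U}_\alpha[f](u)\sim |K_1u|^{\frac{1}{\eta(\alpha-2)+1-\alpha}}\quad\text{as }u\to-\infty,$$ for some $K_1>0$. When $\alpha=\alpha_c$, $\mathcal{U}_{\alpha_c}[f]$ has an exponential decay, while for $\alpha<2$ or $\alpha>\alpha_c$ the support of $\mathcal{U}_\alpha[f]$ is compact. Finally, $\mathcal{U}_\alpha[f]$ tends to the uniform density as $\alpha\to\infty$.
   Context: Up transform: for a probability density $f$ on $[x_i,\infty)$ and $\alpha\neq2$, $\mathcal{U}_\alpha[f](u)=|(\alpha-2)x(u)|^{1/(2-\alpha)}$, where $x(u)$ is the inverse of the change of variable $u(x)=-\int_{x_i}^{x}|(\alpha-2)v|^{1/(\alpha-2)}f(v)\,dv$ (so $u'(x)=-|(\alpha-2)x|^{1/(\alpha-2)}f(x)$; the change of variable is defined up to an additive constant). *)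

theory Defs
  imports "HOL-Analysis.Analysis" "HOL-Library.Landau_Symbols"
begin

text \<open>Change of variable of the Up transform, normalised so that u(x_i) = 0:
  u(x) = - integral over [x_i, x] of |(alpha-2) v| powr (1/(alpha-2)) * f v.\<close>
definition up_var :: "real \<Rightarrow> real \<Rightarrow> (real \<Rightarrow> real) \<Rightarrow> real \<Rightarrow> real" where
  "up_var \<alpha> xi f x = - integral {xi..x} (\<lambda>v. \<bar>(\<alpha> - 2) * v\<bar> powr (1 / (\<alpha> - 2)) * f v)"

definition up_inv :: "real \<Rightarrow> real \<Rightarrow> (real \<Rightarrow> real) \<Rightarrow> real \<Rightarrow> real" where
  "up_inv \<alpha> xi f u = (THE x. xi \<le> x \<and> up_var \<alpha> xi f x = u)"

definition Up :: "real \<Rightarrow> real \<Rightarrow> (real \<Rightarrow> real) \<Rightarrow> real \<Rightarrow> real" where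
  "Up \<alpha> xi f u =
     (if u \<in> up_var \<alpha> xi f ` {xi..}
      then \<bar>(\<alpha> - 2) * up_inv \<alpha> xi f u\<bar> powr (1 / (2 - \<alpha>)) else 0)"

end

(*
  Write w(v) = |(alpha-2) v| powr (1/(alpha-2)) and G(x) = integral of w f over [x_i, x]. Then
  u(x) = -G(x), G is continuous and strictly increasing, and U_alpha[f](-G(x)) = ((alpha-2) x)
  powr (1/(2-alpha)). At infinity w f behaves like c x powr (p - 1) with p = 1/(alpha-2) + 1 - eta,
  so G grows like x powr p if p > 0 (2 < alpha < alpha_c), like ln x if p = 0 (alpha = alpha_c),
  and stays bounded if p < 0 (alpha < 2 or alpha > alpha_c). Inverting these asymptotics gives
  the power law at -infinity, the exponential decay and the compact support respectively.
  As alpha -> infinity the weight w tends to 1 locally uniformly, while the tail bound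
  f(v) = O(v powr -eta) keeps the weighted mass beyond a large V uniformly small; hence G
  converges to the distribution function of f, the range of u shrinks to [-1, 0] and
  U_alpha[f] tends to 1 there.
*)

theory Submission
  imports Defs "HOL-Real_Asymp.Real_Asymp"
begin

section \<open>Integrals of power functions and asymptotic integration\<close>

lemma integral_pos_of_pos:
  fixes g :: "real \<Rightarrow> real"
  assumes g: "g absolutely_integrable_on {a..b}" and "a < b"
    and pos: "\<And>x. x \<in> {a..b} \<Longrightarrow> 0 < g x"
  shows "0 < integral {a..b} g"
proof -
  have "0 \<le> integral {a..b} g"
    using g pos set_lebesgue_integral_eq_integral(1) by (intro integral_nonneg) (auto simp: less_imp_le)
  moreover have "integral {a..b} g \<noteq> 0"
  proof
    assume "integral {a..b} g = 0"
    then have zero: "integral\<^sup>L lebesgue (\<lambda>x. indicator {a..b} x *\<^sub>R g x) = 0"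
      using set_lebesgue_integral_eq_integral(2)[OF g] by (simp add: set_lebesgue_integral_def)
    have int: "integrable lebesgue (\<lambda>x. indicator {a..b} x *\<^sub>R g x)"
      using g by (simp add: set_integrable_def)
    have "AE x in lebesgue. indicator {a..b} x *\<^sub>R g x = 0"
      using integral_nonneg_eq_0_iff_AE[OF int] zero pos by (auto simp: indicator_def less_imp_le)
    moreover have "{x \<in> space lebesgue. indicator {a..b} x *\<^sub>R g x \<noteq> 0} = {a..b}"
      using pos by (force simp: indicator_def)
    ultimately have "emeasure lebesgue {a..b} = 0"
      using AE_iff_measurable[of "{a..b}" lebesgue] by auto
    then show False using \<open>a < b\<close> by simp
  qed
  ultimately show ?thesis by simp
qed

lemma has_integral_cmult_powr:
  fixes c q :: real
  assumes "q \<noteq> -1" "0 < a" "a \<le> b"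
  shows "((\<lambda>v. c * v powr q) has_integral
           (c / (q + 1) * b powr (q + 1) - c / (q + 1) * a powr (q + 1))) {a..b}"
proof (rule fundamental_theorem_of_calculus)
  fix v assume "v \<in> {a..b}"
  then have "0 < v" using assms by auto
  then show "((\<lambda>v. c / (q + 1) * v powr (q + 1)) has_vector_derivative c * v powr q) (at v within {a..b})"
    using assms by (auto intro!: derivative_eq_intros
        simp: has_real_derivative_iff_has_vector_derivative[symmetric])
qed (use assms in auto)

lemma has_integral_cmult_inverse:
  fixes c :: real
  assumes "0 < a" "a \<le> b"
  shows "((\<lambda>v. c * v powr (-1)) has_integral (c * ln b - c * ln a)) {a..b}"
proof (rule fundamental_theorem_of_calculus)
  fix v assume "v \<in> {a..b}"
  then have "0 < v" using assms by auto
  then show "((\<lambda>v. c * ln v) has_vector_derivative c * v powr (-1)) (at v within {a..b})"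
    by (auto intro!: derivative_eq_intros
        simp: has_real_derivative_iff_has_vector_derivative[symmetric] powr_neg_one)
qed (use assms in auto)

lemma integral_le_powr_tail:
  fixes g :: "real \<Rightarrow> real"
  assumes "0 < V" "V \<le> x" "q < -1" "0 \<le> K" "g integrable_on {V..x}"
    and le: "\<And>v. V \<le> v \<Longrightarrow> v \<le> x \<Longrightarrow> g v \<le> K * v powr q"
  shows "integral {V..x} g \<le> K / (- q - 1) * V powr (q + 1)"
proof -
  have int: "((\<lambda>v. K * v powr q) has_integral
               (K / (q + 1) * x powr (q + 1) - K / (q + 1) * V powr (q + 1))) {V..x}"
    using assms by (intro has_integral_cmult_powr) auto
  have "integral {V..x} g \<le> K / (q + 1) * x powr (q + 1) - K / (q + 1) * V powr (q + 1)"
    using integrable_integral[OF \<open>g integrable_on {V..x}\<close>] int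
    by (rule has_integral_le) (auto intro!: le)
  also have "\<dots> \<le> - (K / (q + 1) * V powr (q + 1))"
  proof -
    have "K / (q + 1) \<le> 0"
      using assms by (simp add: divide_nonneg_neg)
    then have "K / (q + 1) * x powr (q + 1) \<le> 0"
      by (rule mult_nonpos_nonneg) simp
    then show ?thesis by linarith
  qed
  also have "\<dots> = K / (- q - 1) * V powr (q + 1)"
  proof -
    have "- q - 1 = - (q + 1)" by simp
    then show ?thesis by (simp only: divide_minus_right mult_minus_left)
  qed
  finally show ?thesis .
qed

lemma integral_diff_antiderivative_le:
  fixes g h H :: "real \<Rightarrow> real"
  assumes "a \<le> V" "V \<le> x" and g: "g integrable_on {a..x}"
    and h: "(h has_integral (H x - H V)) {V..x}"
    and close: "\<And>v. V \<le> v \<Longrightarrow> v \<le> x \<Longrightarrow> \<bar>g v - h v\<bar> \<le> \<epsilon> * h v"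
  shows "\<bar>integral {a..x} g - H x\<bar> \<le> \<bar>integral {a..V} g - H V\<bar> + \<epsilon> * (H x - H V)"
proof -
  have gV: "g integrable_on {V..x}"
    by (rule integrable_on_subinterval[OF g]) (use assms in auto)
  have split: "integral {a..x} g = integral {a..V} g + integral {V..x} g"
    using Henstock_Kurzweil_Integration.integral_combine[OF assms(1,2) g] by simp
  have hV: "h integrable_on {V..x}"
    using h by blast
  have "norm (integral {V..x} (\<lambda>v. g v - h v)) \<le> integral {V..x} (\<lambda>v. \<epsilon> * h v)"
    by (rule integral_norm_bound_integral)
      (use gV hV close in \<open>auto intro: integrable_diff integrable_on_mult_right\<close>)
  moreover have "integral {V..x} (\<lambda>v. g v - h v) = integral {V..x} g - (H x - H V)"
    using integral_diff[OF gV hV] integral_unique[OF h] by simp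
  moreover have "integral {V..x} (\<lambda>v. \<epsilon> * h v) = \<epsilon> * (H x - H V)"
    using integral_unique[OF h] by simp
  ultimately show ?thesis
    using split unfolding real_norm_def by arith
qed

lemma integral_asymp_equiv_antiderivative:
  fixes g h H :: "real \<Rightarrow> real"
  assumes g: "\<And>x. a \<le> x \<Longrightarrow> g integrable_on {a..x}"
    and gh: "g \<sim>[at_top] h" and h_pos: "eventually (\<lambda>v. 0 < h v) at_top"
    and H: "\<And>x y. b \<le> x \<Longrightarrow> x \<le> y \<Longrightarrow> (h has_integral (H y - H x)) {x..y}"
    and H_top: "filterlim H at_top at_top"
  shows "(\<lambda>x. integral {a..x} g) \<sim>[at_top] H"
proof (rule asymp_equivI', rule tendstoI)
  fix e :: real assume "0 < e"
  have "((\<lambda>v. g v / h v) \<longlongrightarrow> 1) at_top"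
    using asymp_equivD_strong[OF gh eventually_mono[OF h_pos]] by auto
  then have "eventually (\<lambda>v. dist (g v / h v) 1 < e / 2) at_top"
    using \<open>0 < e\<close> by (intro tendstoD) auto
  with h_pos have "eventually (\<lambda>v. \<bar>g v - h v\<bar> \<le> e / 2 * h v) at_top"
    by eventually_elim (simp add: dist_real_def abs_less_iff abs_le_iff field_simps)
  then obtain V0 where V0: "\<And>v. V0 \<le> v \<Longrightarrow> \<bar>g v - h v\<bar> \<le> e / 2 * h v"
    by (auto simp: eventually_at_top_linorder)
  define V where "V = max V0 (max a b)"
  define K where "K = \<bar>integral {a..V} g - H V\<bar> + e / 2 * \<bar>H V\<bar>"
  have "eventually (\<lambda>x. 2 * K / e + 1 \<le> H x \<and> V \<le> x) at_top"
    using H_top by (auto simp: filterlim_at_top intro: eventually_conj eventually_ge_at_top)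
  then show "eventually (\<lambda>x. dist (integral {a..x} g / H x) 1 < e) at_top"
  proof eventually_elim
    case (elim x)
    have "\<bar>integral {a..x} g - H x\<bar> \<le> \<bar>integral {a..V} g - H V\<bar> + e / 2 * (H x - H V)"
      using elim V0 g[of x] H[of V x] by (intro integral_diff_antiderivative_le) (auto simp: V_def)
    also have "\<dots> \<le> K + e / 2 * H x"
      using \<open>0 < e\<close> by (auto simp: K_def right_diff_distrib abs_if)
    also have "\<dots> < e * H x"
      using elim \<open>0 < e\<close> by (simp add: field_simps K_def)
    finally have "\<bar>integral {a..x} g - H x\<bar> < e * H x" .
    moreover have "0 < H x"
      using elim \<open>0 < e\<close> by (smt (verit) K_def divide_nonneg_pos zero_le_mult_iff)
    ultimately show ?case
      by (simp add: dist_real_def abs_less_iff field_simps)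
  qed
qed

lemma filterlim_cmult_powr_at_top:
  fixes k q :: real
  assumes "0 < k" "0 < q"
  shows "filterlim (\<lambda>x. k * x powr q) at_top at_top"
  using assms by real_asymp

section \<open>The weighted distribution function\<close>

definition up_weight :: "real \<Rightarrow> real \<Rightarrow> real" where
  "up_weight \<alpha> v = \<bar>(\<alpha> - 2) * v\<bar> powr (1 / (\<alpha> - 2))"

lemma up_weight_pos: "\<alpha> \<noteq> 2 \<Longrightarrow> 0 < v \<Longrightarrow> 0 < up_weight \<alpha> v"
  by (simp add: up_weight_def)

lemma up_weight_eq: "0 < v \<Longrightarrow> up_weight \<alpha> v = \<bar>\<alpha> - 2\<bar> powr (1 / (\<alpha> - 2)) * v powr (1 / (\<alpha> - 2))"
  by (simp add: up_weight_def abs_mult powr_mult)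

lemma up_weight_mono:
  assumes "2 < \<alpha>" "0 \<le> v" "v \<le> w"
  shows "up_weight \<alpha> v \<le> up_weight \<alpha> w"
  using assms by (auto simp: up_weight_def intro!: powr_mono2)

lemma up_weight_ge_1:
  assumes "0 \<le> v" "1 \<le> (\<alpha> - 2) * v"
  shows "1 \<le> up_weight \<alpha> v"
proof -
  have "0 < \<alpha> - 2"
    using assms by (smt (verit) mult_nonpos_nonneg)
  then show ?thesis
    using assms by (auto simp: up_weight_def intro: ge_one_powr_ge_zero)
qed

lemma up_weight_tendsto_1:
  assumes "0 < c"
  shows "((\<lambda>\<alpha>. up_weight \<alpha> c) \<longlongrightarrow> 1) at_top"
  unfolding up_weight_def using assms by real_asymp

locale up_density =
  fixes f :: "real \<Rightarrow> real" and xi :: real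
  assumes xi_pos: "0 < xi"
    and f_pos: "\<And>x. xi \<le> x \<Longrightarrow> 0 < f x"
    and f_integrable: "f integrable_on {xi..}"
begin

definition weighted_cdf :: "real \<Rightarrow> real \<Rightarrow> real" where
  "weighted_cdf \<alpha> x = integral {xi..x} (\<lambda>v. up_weight \<alpha> v * f v)"

lemma up_var_eq: "up_var \<alpha> xi f x = - weighted_cdf \<alpha> x"
  by (simp add: up_var_def weighted_cdf_def up_weight_def)

lemma f_integrable_interval: "f integrable_on {xi..x}"
  by (rule integrable_on_subinterval[OF f_integrable]) auto

lemma weighted_density_integrable:
  assumes "\<alpha> \<noteq> 2"
  shows "(\<lambda>v. up_weight \<alpha> v * f v) absolutely_integrable_on {xi..x}"
proof (rule absolutely_integrable_bounded_measurable_product_real)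
  have "continuous_on {xi..x} (up_weight \<alpha>)"
    unfolding up_weight_def using assms xi_pos by (intro continuous_intros) auto
  then show "up_weight \<alpha> \<in> borel_measurable (lebesgue_on {xi..x})"
    and "bounded (up_weight \<alpha> ` {xi..x})"
    by (auto intro: continuous_imp_measurable_on_sets_lebesgue compact_imp_bounded compact_continuous_image)
  show "f absolutely_integrable_on {xi..x}"
    using f_integrable_interval f_pos
    by (intro nonnegative_absolutely_integrable_1) (auto simp: less_imp_le)
qed auto

lemma weighted_density_integrable_on:
  assumes "\<alpha> \<noteq> 2" "xi \<le> a"
  shows "(\<lambda>v. up_weight \<alpha> v * f v) integrable_on {a..b}"
  using integrable_on_subinterval[OF set_lebesgue_integral_eq_integral(1)[OF
        weighted_density_integrable[OF assms(1), of b]]] assms(2) by auto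

lemma weighted_density_pos: "\<alpha> \<noteq> 2 \<Longrightarrow> xi \<le> v \<Longrightarrow> 0 < up_weight \<alpha> v * f v"
  using up_weight_pos f_pos xi_pos by simp

lemma weighted_cdf_xi [simp]: "weighted_cdf \<alpha> xi = 0"
  by (simp add: weighted_cdf_def)

lemma weighted_cdf_split:
  assumes "\<alpha> \<noteq> 2" "xi \<le> a" "a \<le> b"
  shows "weighted_cdf \<alpha> b = weighted_cdf \<alpha> a + integral {a..b} (\<lambda>v. up_weight \<alpha> v * f v)"
  unfolding weighted_cdf_def using assms
  by (intro Henstock_Kurzweil_Integration.integral_combine[symmetric] weighted_density_integrable_on) auto

lemma weighted_cdf_strict_mono:
  assumes "\<alpha> \<noteq> 2" "xi \<le> a" "a < b"
  shows "weighted_cdf \<alpha> a < weighted_cdf \<alpha> b"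
proof -
  have "0 < integral {a..b} (\<lambda>v. up_weight \<alpha> v * f v)"
  proof (rule integral_pos_of_pos)
    show "(\<lambda>v. up_weight \<alpha> v * f v) absolutely_integrable_on {a..b}"
      using assms weighted_density_pos
      by (intro nonnegative_absolutely_integrable_1 weighted_density_integrable_on)
        (auto simp: less_imp_le)
  qed (use assms weighted_density_pos in auto)
  then show ?thesis
    using weighted_cdf_split[of \<alpha> a b] assms by simp
qed

lemma weighted_cdf_mono: "\<alpha> \<noteq> 2 \<Longrightarrow> xi \<le> a \<Longrightarrow> a \<le> b \<Longrightarrow> weighted_cdf \<alpha> a \<le> weighted_cdf \<alpha> b"
  using weighted_cdf_strict_mono by (cases "a = b") (auto simp: less_le)

lemma weighted_cdf_nonneg: "\<alpha> \<noteq> 2 \<Longrightarrow> xi \<le> x \<Longrightarrow> 0 \<le> weighted_cdf \<alpha> x"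
  using weighted_cdf_mono[of \<alpha> xi x] by simp

lemma weighted_cdf_attains:
  assumes "\<alpha> \<noteq> 2" "0 \<le> y" "xi \<le> X" "y \<le> weighted_cdf \<alpha> X"
  obtains x where "xi \<le> x" "x \<le> X" "weighted_cdf \<alpha> x = y"
proof -
  have "continuous_on {xi..X} (weighted_cdf \<alpha>)"
    unfolding weighted_cdf_def[abs_def]
    by (intro indefinite_integral_continuous_1 weighted_density_integrable_on assms) auto
  then show ?thesis
    using IVT'[of "weighted_cdf \<alpha>" xi y X] assms that by auto
qed

lemma up_inv_weighted_cdf:
  assumes "\<alpha> \<noteq> 2" "xi \<le> x"
  shows "up_inv \<alpha> xi f (- weighted_cdf \<alpha> x) = x"
  unfolding up_inv_def up_var_eq
proof (rule the_equality)
  fix y assume "xi \<le> y \<and> - weighted_cdf \<alpha> y = - weighted_cdf \<alpha> x"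
  then show "y = x"
    using weighted_cdf_strict_mono[OF assms(1)] assms
    by (metis linorder_neqE_linordered_idom neg_equal_iff_equal order_less_irrefl)
qed (use assms in auto)

lemma Up_weighted_cdf:
  assumes "\<alpha> \<noteq> 2" "xi \<le> x"
  shows "Up \<alpha> xi f (- weighted_cdf \<alpha> x) = \<bar>(\<alpha> - 2) * x\<bar> powr (1 / (2 - \<alpha>))"
  using assms up_inv_weighted_cdf[OF assms] by (auto simp: Up_def up_var_eq)

lemma Up_neq_0_iff:
  assumes "\<alpha> \<noteq> 2"
  shows "Up \<alpha> xi f u \<noteq> 0 \<longleftrightarrow> (\<exists>x\<ge>xi. u = - weighted_cdf \<alpha> x)"
proof
  show "Up \<alpha> xi f u \<noteq> 0 \<Longrightarrow> \<exists>x\<ge>xi. u = - weighted_cdf \<alpha> x"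
    by (auto simp: Up_def up_var_eq split: if_splits)
  show "\<exists>x\<ge>xi. u = - weighted_cdf \<alpha> x \<Longrightarrow> Up \<alpha> xi f u \<noteq> 0"
    using Up_weighted_cdf assms xi_pos by auto
qed

lemma Up_eq_0:
  assumes "\<alpha> \<noteq> 2" "\<And>x. xi \<le> x \<Longrightarrow> u \<noteq> - weighted_cdf \<alpha> x"
  shows "Up \<alpha> xi f u = 0"
  using assms Up_neq_0_iff by blast

lemma Up_support_subset:
  assumes "\<alpha> \<noteq> 2" "\<And>x. xi \<le> x \<Longrightarrow> weighted_cdf \<alpha> x \<le> B"
  shows "{u. Up \<alpha> xi f u \<noteq> 0} \<subseteq> {-B..0}"
  using assms weighted_cdf_nonneg by (force simp: Up_neq_0_iff)

lemma
  assumes "\<alpha> \<noteq> 2" "filterlim (weighted_cdf \<alpha>) at_top at_top" "u \<le> 0"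
  shows up_inv_ge: "xi \<le> up_inv \<alpha> xi f u"
    and weighted_cdf_up_inv: "weighted_cdf \<alpha> (up_inv \<alpha> xi f u) = - u"
    and Up_eq_up_inv: "Up \<alpha> xi f u = \<bar>(\<alpha> - 2) * up_inv \<alpha> xi f u\<bar> powr (1 / (2 - \<alpha>))"
proof -
  have "eventually (\<lambda>X. - u \<le> weighted_cdf \<alpha> X \<and> xi \<le> X) at_top"
    using assms(2) by (auto simp: filterlim_at_top intro: eventually_conj eventually_ge_at_top)
  then obtain X where "- u \<le> weighted_cdf \<alpha> X" "xi \<le> X"
    by (auto simp: eventually_at_top_linorder)
  then obtain x where x: "xi \<le> x" "weighted_cdf \<alpha> x = - u"
    using weighted_cdf_attains[OF assms(1)] assms(3) by (metis neg_0_le_iff_le)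
  then have "up_inv \<alpha> xi f u = x"
    using up_inv_weighted_cdf[OF assms(1) x(1)] by simp
  with x show "xi \<le> up_inv \<alpha> xi f u" "weighted_cdf \<alpha> (up_inv \<alpha> xi f u) = - u"
    and "Up \<alpha> xi f u = \<bar>(\<alpha> - 2) * up_inv \<alpha> xi f u\<bar> powr (1 / (2 - \<alpha>))"
    using Up_weighted_cdf[OF assms(1) x(1)] by auto
qed

lemma filterlim_up_inv:
  assumes "\<alpha> \<noteq> 2" "filterlim (weighted_cdf \<alpha>) at_top at_top"
  shows "filterlim (up_inv \<alpha> xi f) at_top at_bot"
  unfolding filterlim_at_top
proof
  fix Z :: real
  define Z' where "Z' = max Z xi"
  show "eventually (\<lambda>u. Z \<le> up_inv \<alpha> xi f u) at_bot"
    using eventually_gt_at_bot[of "- weighted_cdf \<alpha> Z'"] eventually_le_at_bot[of 0]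
  proof eventually_elim
    case (elim u)
    then have "\<not> up_inv \<alpha> xi f u \<le> Z'"
      using weighted_cdf_mono[OF assms(1), of "up_inv \<alpha> xi f u" Z']
        up_inv_ge[OF assms elim(2)] weighted_cdf_up_inv[OF assms elim(2)] by auto
    then show ?case by (simp add: Z'_def)
  qed
qed

lemma up_inv_asymp:
  assumes "\<alpha> \<noteq> 2" "filterlim (weighted_cdf \<alpha>) at_top at_top" "weighted_cdf \<alpha> \<sim>[at_top] H"
  shows "(\<lambda>u. - u) \<sim>[at_bot] (\<lambda>u. H (up_inv \<alpha> xi f u))"
proof (rule asymp_equiv_transfer)
  show "(\<lambda>u. weighted_cdf \<alpha> (up_inv \<alpha> xi f u)) \<sim>[at_bot] (\<lambda>u. H (up_inv \<alpha> xi f u))"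
    using asymp_equiv_compose'[OF assms(3) filterlim_up_inv[OF assms(1,2)]] .
  show "eventually (\<lambda>u. weighted_cdf \<alpha> (up_inv \<alpha> xi f u) = - u) at_bot"
    using eventually_le_at_bot[of 0] by eventually_elim (rule weighted_cdf_up_inv[OF assms(1,2)])
qed simp

lemma up_inv_asymp_powr:
  assumes "\<alpha> \<noteq> 2" "0 < k" "0 < p"
    and G_top: "filterlim (weighted_cdf \<alpha>) at_top at_top"
    and G: "weighted_cdf \<alpha> \<sim>[at_top] (\<lambda>x. k * x powr p)"
  shows "up_inv \<alpha> xi f \<sim>[at_bot] (\<lambda>u. (- u / k) powr (1 / p))"
proof -
  have x_pos: "eventually (\<lambda>u. 0 < up_inv \<alpha> xi f u) at_bot"
    using eventually_le_at_bot[of 0]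
  proof eventually_elim
    case (elim u)
    show ?case
      using up_inv_ge[OF assms(1) G_top elim] xi_pos by linarith
  qed
  have nonneg_lhs: "eventually (\<lambda>u. 0 \<le> k * up_inv \<alpha> xi f u powr p / k) at_bot"
    using assms(2) by (intro always_eventually allI) simp
  have nonneg_rhs: "eventually (\<lambda>u. 0 \<le> - u / k) at_bot"
    using eventually_le_at_bot[of 0]
    by eventually_elim (use assms(2) in \<open>simp add: divide_nonpos_pos\<close>)
  have "up_inv \<alpha> xi f \<sim>[at_bot] (\<lambda>u. (k * up_inv \<alpha> xi f u powr p / k) powr (1 / p))"
    using x_pos
    by (rule asymp_equiv_refl_ev[OF eventually_mono]) (use assms in \<open>simp add: powr_powr\<close>)
  also have "\<dots> \<sim>[at_bot] (\<lambda>u. (- u / k) powr (1 / p))"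
    by (intro asymp_equiv_powr_real asymp_equiv_divide asymp_equiv_refl
        asymp_equiv_symI[OF up_inv_asymp[OF assms(1) G_top G]] nonneg_lhs nonneg_rhs)
  finally show ?thesis .
qed

lemma Up_asymp_powr:
  assumes "2 < \<alpha>" "0 < k" "0 < p"
    and G_top: "filterlim (weighted_cdf \<alpha>) at_top at_top"
    and G: "weighted_cdf \<alpha> \<sim>[at_top] (\<lambda>x. k * x powr p)"
  shows "Up \<alpha> xi f \<sim>[at_bot] (\<lambda>u. ((\<alpha> - 2) * (- u / k) powr (1 / p)) powr (1 / (2 - \<alpha>)))"
proof -
  have "\<alpha> \<noteq> 2"
    using assms(1) by simp
  have x_pos: "eventually (\<lambda>u. u \<le> 0 \<and> 0 < up_inv \<alpha> xi f u) at_bot"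
    using eventually_le_at_bot[of 0]
  proof eventually_elim
    case (elim u)
    then show ?case
      using up_inv_ge[OF \<open>\<alpha> \<noteq> 2\<close> G_top elim] xi_pos by linarith
  qed
  have nonneg: "eventually (\<lambda>u. 0 \<le> (\<alpha> - 2) * up_inv \<alpha> xi f u) at_bot"
    "eventually (\<lambda>u. 0 \<le> (\<alpha> - 2) * (- u / k) powr (1 / p)) at_bot"
    using x_pos assms(1) by (auto elim!: eventually_mono)
  have "Up \<alpha> xi f \<sim>[at_bot] (\<lambda>u. ((\<alpha> - 2) * up_inv \<alpha> xi f u) powr (1 / (2 - \<alpha>)))"
    using x_pos
    by (rule asymp_equiv_refl_ev[OF eventually_mono])
      (use Up_eq_up_inv[OF \<open>\<alpha> \<noteq> 2\<close> G_top] assms(1) in \<open>simp add: abs_of_pos\<close>)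
  also have "\<dots> \<sim>[at_bot] (\<lambda>u. ((\<alpha> - 2) * (- u / k) powr (1 / p)) powr (1 / (2 - \<alpha>)))"
    by (intro asymp_equiv_powr_real asymp_equiv_mult asymp_equiv_refl
        up_inv_asymp_powr[OF \<open>\<alpha> \<noteq> 2\<close> assms(2-5)] nonneg)
  finally show ?thesis .
qed

lemma ln_Up_divide_tendsto:
  assumes "2 < \<alpha>" "0 < c"
    and G_top: "filterlim (weighted_cdf \<alpha>) at_top at_top"
    and G: "weighted_cdf \<alpha> \<sim>[at_top] (\<lambda>x. c * ln x)"
  shows "((\<lambda>u. ln (Up \<alpha> xi f u) / u) \<longlongrightarrow> 1 / ((\<alpha> - 2) * c)) at_bot"
proof -
  define x where "x = up_inv \<alpha> xi f"
  have "\<alpha> \<noteq> 2"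
    using assms(1) by simp
  have "(\<lambda>y. ln ((\<alpha> - 2) * y)) \<sim>[at_top] ln"
    using assms(1) by real_asymp
  then have "(\<lambda>u. ln ((\<alpha> - 2) * x u)) \<sim>[at_bot] (\<lambda>u. ln (x u))"
    unfolding x_def by (rule asymp_equiv_compose'[OF _ filterlim_up_inv[OF \<open>\<alpha> \<noteq> 2\<close> G_top]])
  also have "(\<lambda>u. ln (x u)) \<sim>[at_bot] (\<lambda>u. - u / c)"
  proof -
    have "(\<lambda>u. c * ln (x u) / c) \<sim>[at_bot] (\<lambda>u. - u / c)"
      unfolding x_def
      by (intro asymp_equiv_divide asymp_equiv_refl asymp_equiv_symI[OF up_inv_asymp[OF \<open>\<alpha> \<noteq> 2\<close> G_top G]])
    then show ?thesis
      using \<open>0 < c\<close> by simp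
  qed
  finally have "(\<lambda>u. ln ((\<alpha> - 2) * x u) / ((2 - \<alpha>) * u)) \<sim>[at_bot] (\<lambda>u. - u / c / ((2 - \<alpha>) * u))"
    by (intro asymp_equiv_divide asymp_equiv_refl)
  moreover have "eventually (\<lambda>u. ln ((\<alpha> - 2) * x u) / ((2 - \<alpha>) * u) = ln (Up \<alpha> xi f u) / u) at_bot"
    using eventually_le_at_bot[of 0]
  proof eventually_elim
    case (elim u)
    then have "0 < x u"
      using up_inv_ge[OF \<open>\<alpha> \<noteq> 2\<close> G_top elim] xi_pos by (simp add: x_def)
    then show ?case
      using Up_eq_up_inv[OF \<open>\<alpha> \<noteq> 2\<close> G_top elim] assms(1)
      by (simp add: x_def abs_of_pos ln_powr)
  qed
  moreover have "eventually (\<lambda>u. - u / c / ((2 - \<alpha>) * u) = 1 / ((\<alpha> - 2) * c)) at_bot"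
    using eventually_gt_at_bot[of 0]
    by eventually_elim (use assms in \<open>simp add: field_simps\<close>)
  ultimately have "(\<lambda>u. ln (Up \<alpha> xi f u) / u) \<sim>[at_bot] (\<lambda>_. 1 / ((\<alpha> - 2) * c))"
    by (rule asymp_equiv_transfer)
  then show ?thesis
    by (rule asymp_equivD_const)
qed

lemma Up_support_unbounded:
  assumes "\<alpha> \<noteq> 2" "filterlim (weighted_cdf \<alpha>) at_top at_top"
  shows "\<not> bounded {u. Up \<alpha> xi f u \<noteq> 0}"
proof
  assume "bounded {u. Up \<alpha> xi f u \<noteq> 0}"
  moreover have "{..0} \<subseteq> {u. Up \<alpha> xi f u \<noteq> 0}"
  proof
    fix u :: real assume "u \<in> {..0}"
    then have "xi \<le> up_inv \<alpha> xi f u" "u = - weighted_cdf \<alpha> (up_inv \<alpha> xi f u)"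
      using up_inv_ge[OF assms] weighted_cdf_up_inv[OF assms] by auto
    then show "u \<in> {u. Up \<alpha> xi f u \<noteq> 0}"
      using Up_neq_0_iff[OF assms(1)] by blast
  qed
  ultimately have "bounded {..0::real}"
    using bounded_subset by blast
  then obtain B where "\<And>x::real. x \<le> 0 \<Longrightarrow> \<bar>x\<bar> \<le> B"
    by (auto simp: bounded_iff)
  from this[of "- \<bar>B\<bar> - 1"] show False by linarith
qed

lemma cdf_tendsto: "((\<lambda>x. integral {xi..x} f) \<longlongrightarrow> integral {xi..} f) at_top"
proof -
  have f: "set_integrable lebesgue {xi..} f"
    using nonnegative_absolutely_integrable_1[OF f_integrable] f_pos by (auto simp: less_imp_le)
  have "((\<lambda>x. set_lebesgue_integral lebesgue {xi..x} f) \<longlongrightarrow> set_lebesgue_integral lebesgue {xi..} f) at_top"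
    by (rule tendsto_set_lebesgue_integral_at_top[OF _ f]) auto
  moreover have "set_lebesgue_integral lebesgue {xi..x} f = integral {xi..x} f" for x
    using f by (intro set_lebesgue_integral_eq_integral(2) set_integrable_subset[OF f]) auto
  ultimately show ?thesis
    using set_lebesgue_integral_eq_integral(2)[OF f] by simp
qed

lemma cdf_le: "integral {xi..x} f \<le> integral {xi..} f"
  using f_integrable_interval f_integrable f_pos by (intro integral_subset_le) (auto simp: less_imp_le)

lemma cdf_le_weighted_cdf:
  assumes "1 \<le> (\<alpha> - 2) * xi"
  shows "integral {xi..x} f \<le> weighted_cdf \<alpha> x"
  unfolding weighted_cdf_def
proof (rule integral_le[OF f_integrable_interval weighted_density_integrable_on])
  show "\<alpha> \<noteq> 2"
    using assms by auto
  have "0 < \<alpha> - 2"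
    using assms xi_pos zero_less_mult_pos2[of "\<alpha> - 2" xi] by linarith
  fix v assume "v \<in> {xi..x}"
  then have "(\<alpha> - 2) * xi \<le> (\<alpha> - 2) * v"
    using \<open>0 < \<alpha> - 2\<close> by (intro mult_left_mono) auto
  then have "1 \<le> up_weight \<alpha> v" "0 < f v"
    using assms xi_pos f_pos \<open>v \<in> {xi..x}\<close> by (auto intro!: up_weight_ge_1)
  then show "f v \<le> up_weight \<alpha> v * f v"
    by simp
qed (use xi_pos in auto)

lemma weighted_cdf_le_cdf:
  assumes "2 < \<alpha>" "xi \<le> V"
  shows "weighted_cdf \<alpha> V \<le> up_weight \<alpha> V * integral {xi..V} f"
  unfolding weighted_cdf_def
proof -
  have "integral {xi..V} (\<lambda>v. up_weight \<alpha> v * f v) \<le> integral {xi..V} (\<lambda>v. up_weight \<alpha> V * f v)"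
  proof (rule integral_le)
    fix v assume "v \<in> {xi..V}"
    then show "up_weight \<alpha> v * f v \<le> up_weight \<alpha> V * f v"
      using assms xi_pos f_pos[of v] by (intro mult_right_mono up_weight_mono) auto
  qed (use assms weighted_density_integrable_on integrable_on_mult_right[OF f_integrable_interval] in auto)
  then show "integral {xi..V} (\<lambda>v. up_weight \<alpha> v * f v) \<le> up_weight \<alpha> V * integral {xi..V} f"
    by simp
qed

lemma Up_tendsto_1:
  assumes "- integral {xi..} f < u" "u \<le> 0"
  shows "((\<lambda>\<alpha>. Up \<alpha> xi f u) \<longlongrightarrow> 1) at_top"
proof -
  have "eventually (\<lambda>X. xi \<le> X \<and> - u < integral {xi..X} f) at_top"
    using order_tendstoD(1)[OF cdf_tendsto] assms(1) by (intro eventually_conj) auto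
  then obtain X where X: "xi \<le> X" "- u < integral {xi..X} f"
    by (auto simp: eventually_at_top_linorder)
  have bounds: "eventually (\<lambda>\<alpha>. ((\<alpha> - 2) * X) powr (1 / (2 - \<alpha>)) \<le> Up \<alpha> xi f u
                         \<and> Up \<alpha> xi f u \<le> ((\<alpha> - 2) * xi) powr (1 / (2 - \<alpha>))) at_top"
    using eventually_ge_at_top[of "2 + 1 / xi"]
  proof eventually_elim
    case (elim \<alpha>)
    moreover have "0 < 1 / xi"
      using xi_pos by simp
    ultimately have "2 < \<alpha>" and weight: "1 \<le> (\<alpha> - 2) * xi"
      using xi_pos by (linarith, simp add: field_simps)
    then have "\<alpha> \<noteq> 2" by simp
    have "- u \<le> weighted_cdf \<alpha> X"
      using X cdf_le_weighted_cdf[OF weight, of X] by linarith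
    then obtain x where x: "xi \<le> x" "x \<le> X" "weighted_cdf \<alpha> x = - u"
      using weighted_cdf_attains[OF \<open>\<alpha> \<noteq> 2\<close>] assms(2) X(1)
      by (metis neg_0_le_iff_le)
    then have "Up \<alpha> xi f u = ((\<alpha> - 2) * x) powr (1 / (2 - \<alpha>))"
      using Up_weighted_cdf[OF \<open>\<alpha> \<noteq> 2\<close> x(1)] \<open>2 < \<alpha>\<close> xi_pos
      by (simp add: abs_of_pos)
    moreover have "1 / (2 - \<alpha>) \<le> 0"
      using \<open>2 < \<alpha>\<close> by simp
    ultimately show ?case
      using x \<open>2 < \<alpha>\<close> xi_pos by (auto intro!: powr_mono2')
  qed
  have lim: "((\<lambda>\<alpha>. ((\<alpha> - 2) * c) powr (1 / (2 - \<alpha>))) \<longlongrightarrow> 1) at_top" if "0 < c" for c :: real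
    using that by real_asymp
  show ?thesis
  proof (rule tendsto_sandwich)
    show "eventually (\<lambda>\<alpha>. ((\<alpha> - 2) * X) powr (1 / (2 - \<alpha>)) \<le> Up \<alpha> xi f u) at_top"
      using bounds by eventually_elim blast
    show "eventually (\<lambda>\<alpha>. Up \<alpha> xi f u \<le> ((\<alpha> - 2) * xi) powr (1 / (2 - \<alpha>))) at_top"
      using bounds by eventually_elim blast
  qed (use lim X(1) xi_pos in auto)
qed

end

section \<open>Densities with a power-law tail\<close>

lemma tail_exponent_pos:
  fixes \<alpha> \<eta> :: real
  assumes "1 < \<eta>" "2 < \<alpha>" "\<alpha> < 2 + 1 / (\<eta> - 1)"
  shows "0 < 1 / (\<alpha> - 2) - \<eta> + 1"
proof -
  have "(\<alpha> - 2) * (\<eta> - 1) < 1"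
    using assms pos_less_divide_eq[of "\<eta> - 1" "\<alpha> - 2" 1] by simp
  then have "\<eta> - 1 < 1 / (\<alpha> - 2)"
    using assms pos_less_divide_eq[of "\<alpha> - 2" "\<eta> - 1" 1] by (simp add: mult.commute)
  then show ?thesis by simp
qed

lemma tail_exponent_neg:
  fixes \<alpha> \<eta> :: real
  assumes "1 < \<eta>" "\<alpha> < 2 \<or> 2 + 1 / (\<eta> - 1) < \<alpha>"
  shows "1 / (\<alpha> - 2) - \<eta> + 1 < 0"
  using assms(2)
proof
  assume "\<alpha> < 2"
  then have "1 / (\<alpha> - 2) < 0"
    by simp
  then show ?thesis
    using assms(1) by linarith
next
  assume "2 + 1 / (\<eta> - 1) < \<alpha>"
  moreover have "0 < 1 / (\<eta> - 1)"
    using assms(1) by simp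
  ultimately have "0 < \<alpha> - 2" "1 / (\<eta> - 1) < \<alpha> - 2"
    by linarith+
  then have "1 < (\<alpha> - 2) * (\<eta> - 1)"
    using assms(1) pos_divide_less_eq[of "\<eta> - 1" 1 "\<alpha> - 2"] by simp
  then have "1 / (\<alpha> - 2) < \<eta> - 1"
    using \<open>0 < \<alpha> - 2\<close> pos_divide_less_eq[of "\<alpha> - 2" 1 "\<eta> - 1"]
    by (simp add: mult.commute)
  then show ?thesis by simp
qed

locale power_tail_density = up_density +
  fixes C \<eta> :: real
  assumes C_pos: "0 < C" and eta_gt_1: "1 < \<eta>"
    and tail: "f \<sim>[at_top] (\<lambda>x. C * x powr (- \<eta>))"
begin

lemma eventually_density_le: "eventually (\<lambda>v. f v \<le> 2 * C * v powr (- \<eta>)) at_top"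
proof -
  have pos: "eventually (\<lambda>v. 0 < C * v powr (- \<eta>)) at_top"
    using eventually_gt_at_top[of 0] by eventually_elim (simp add: C_pos)
  have "eventually (\<lambda>v. f v \<noteq> 0 \<or> C * v powr (- \<eta>) \<noteq> 0) at_top"
    using pos by eventually_elim (metis less_irrefl)
  then have "((\<lambda>v. f v / (C * v powr (- \<eta>))) \<longlongrightarrow> 1) at_top"
    by (rule asymp_equivD_strong[OF tail])
  then have "eventually (\<lambda>v. f v / (C * v powr (- \<eta>)) < 2) at_top"
    by (rule order_tendstoD) simp
  with pos show ?thesis
    by eventually_elim (simp add: divide_less_eq mult.assoc)
qed

lemma weighted_density_asymp:
  assumes "\<alpha> \<noteq> 2"
  shows "(\<lambda>v. up_weight \<alpha> v * f v) \<sim>[at_top]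
           (\<lambda>v. C * \<bar>\<alpha> - 2\<bar> powr (1 / (\<alpha> - 2)) * v powr (1 / (\<alpha> - 2) - \<eta>))"
proof (rule asymp_equiv_transfer)
  show "(\<lambda>v. up_weight \<alpha> v * f v) \<sim>[at_top]
          (\<lambda>v. (\<bar>\<alpha> - 2\<bar> powr (1 / (\<alpha> - 2)) * v powr (1 / (\<alpha> - 2))) * (C * v powr (- \<eta>)))"
  proof (rule asymp_equiv_mult[OF _ tail])
    show "up_weight \<alpha> \<sim>[at_top] (\<lambda>v. \<bar>\<alpha> - 2\<bar> powr (1 / (\<alpha> - 2)) * v powr (1 / (\<alpha> - 2)))"
      using eventually_gt_at_top[of 0]
      by (rule asymp_equiv_refl_ev[OF eventually_mono]) (simp add: up_weight_eq)
  qed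
  show "eventually (\<lambda>v. (\<bar>\<alpha> - 2\<bar> powr (1 / (\<alpha> - 2)) * v powr (1 / (\<alpha> - 2))) * (C * v powr (- \<eta>))
          = C * \<bar>\<alpha> - 2\<bar> powr (1 / (\<alpha> - 2)) * v powr (1 / (\<alpha> - 2) - \<eta>)) at_top"
    by (intro always_eventually allI) (simp add: powr_diff powr_minus field_simps)
qed simp

lemma weighted_cdf_asymp_powr:
  assumes "\<alpha> \<noteq> 2" and p: "0 < 1 / (\<alpha> - 2) - \<eta> + 1"
  shows "weighted_cdf \<alpha> \<sim>[at_top] (\<lambda>x. C * \<bar>\<alpha> - 2\<bar> powr (1 / (\<alpha> - 2)) / (1 / (\<alpha> - 2) - \<eta> + 1)
                                       * x powr (1 / (\<alpha> - 2) - \<eta> + 1))"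
  unfolding weighted_cdf_def[abs_def]
proof (rule integral_asymp_equiv_antiderivative[OF _ weighted_density_asymp[OF assms(1)], where b = 1])
  show "filterlim (\<lambda>x. C * \<bar>\<alpha> - 2\<bar> powr (1 / (\<alpha> - 2)) / (1 / (\<alpha> - 2) - \<eta> + 1)
                                       * x powr (1 / (\<alpha> - 2) - \<eta> + 1)) at_top at_top"
    by (rule filterlim_cmult_powr_at_top) (use assms C_pos in simp_all)
  show "eventually (\<lambda>v. 0 < C * \<bar>\<alpha> - 2\<bar> powr (1 / (\<alpha> - 2)) * v powr (1 / (\<alpha> - 2) - \<eta>)) at_top"
    using eventually_gt_at_top[of 0] by eventually_elim (use assms C_pos in simp)
qed (use assms weighted_density_integrable_on has_integral_cmult_powr in auto)

lemma weighted_cdf_asymp_ln: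
  assumes "\<alpha> \<noteq> 2" and p: "1 / (\<alpha> - 2) - \<eta> + 1 = 0"
  shows "weighted_cdf \<alpha> \<sim>[at_top] (\<lambda>x. C * \<bar>\<alpha> - 2\<bar> powr (1 / (\<alpha> - 2)) * ln x)"
  unfolding weighted_cdf_def[abs_def]
proof (rule integral_asymp_equiv_antiderivative[OF _ weighted_density_asymp[OF assms(1)], where b = 1])
  have "1 / (\<alpha> - 2) - \<eta> = -1"
    using p by simp
  then show "((\<lambda>v. C * \<bar>\<alpha> - 2\<bar> powr (1 / (\<alpha> - 2)) * v powr (1 / (\<alpha> - 2) - \<eta>)) has_integral
        (C * \<bar>\<alpha> - 2\<bar> powr (1 / (\<alpha> - 2)) * ln y - C * \<bar>\<alpha> - 2\<bar> powr (1 / (\<alpha> - 2)) * ln x)) {x..y}"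
    if "1 \<le> x" "x \<le> y" for x y
    using has_integral_cmult_inverse[of x y] that by simp
  show "filterlim (\<lambda>x. C * \<bar>\<alpha> - 2\<bar> powr (1 / (\<alpha> - 2)) * ln x) at_top at_top"
    using assms C_pos by (intro filterlim_tendsto_pos_mult_at_top[OF tendsto_const _ ln_at_top]) simp
  show "eventually (\<lambda>v. 0 < C * \<bar>\<alpha> - 2\<bar> powr (1 / (\<alpha> - 2)) * v powr (1 / (\<alpha> - 2) - \<eta>)) at_top"
    using eventually_gt_at_top[of 0] by eventually_elim (use assms C_pos in simp)
qed (use assms weighted_density_integrable_on in auto)

lemma filterlim_weighted_cdf:
  assumes "\<alpha> \<noteq> 2" "0 \<le> 1 / (\<alpha> - 2) - \<eta> + 1"
  shows "filterlim (weighted_cdf \<alpha>) at_top at_top"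
proof (cases "1 / (\<alpha> - 2) - \<eta> + 1 = 0")
  case True
  have "filterlim (\<lambda>x. C * \<bar>\<alpha> - 2\<bar> powr (1 / (\<alpha> - 2)) * ln x) at_top at_top"
    using assms C_pos by (intro filterlim_tendsto_pos_mult_at_top[OF tendsto_const _ ln_at_top]) simp
  then show ?thesis
    by (rule asymp_equiv_at_top_transfer[OF asymp_equiv_symI[OF weighted_cdf_asymp_ln[OF assms(1) True]]])
next
  case False
  then have p: "0 < 1 / (\<alpha> - 2) - \<eta> + 1"
    using assms(2) by linarith
  have "filterlim (\<lambda>x. C * \<bar>\<alpha> - 2\<bar> powr (1 / (\<alpha> - 2)) / (1 / (\<alpha> - 2) - \<eta> + 1)
                       * x powr (1 / (\<alpha> - 2) - \<eta> + 1)) at_top at_top"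
    by (rule filterlim_cmult_powr_at_top) (use assms(1) p C_pos in simp_all)
  then show ?thesis
    by (rule asymp_equiv_at_top_transfer[OF asymp_equiv_symI[OF weighted_cdf_asymp_powr[OF assms(1) p]]])
qed

lemma weighted_density_le:
  assumes "\<alpha> \<noteq> 2" "xi \<le> v" "f v \<le> 2 * C * v powr (- \<eta>)" "v powr (1 / (\<alpha> - 2)) \<le> v powr s"
  shows "up_weight \<alpha> v * f v \<le> \<bar>\<alpha> - 2\<bar> powr (1 / (\<alpha> - 2)) * (2 * C) * v powr (s - \<eta>)"
proof -
  have "0 < v"
    using assms(2) xi_pos by linarith
  then have "up_weight \<alpha> v * f v = \<bar>\<alpha> - 2\<bar> powr (1 / (\<alpha> - 2)) * v powr (1 / (\<alpha> - 2)) * f v"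
    by (simp add: up_weight_eq)
  also have "\<dots> \<le> \<bar>\<alpha> - 2\<bar> powr (1 / (\<alpha> - 2)) * v powr s * (2 * C * v powr (- \<eta>))"
    using assms f_pos[of v] by (intro mult_mono mult_left_mono) auto
  also have "\<dots> = \<bar>\<alpha> - 2\<bar> powr (1 / (\<alpha> - 2)) * (2 * C) * v powr (s - \<eta>)"
    by (simp add: powr_diff powr_minus divide_inverse)
  finally show ?thesis .
qed

lemma weighted_cdf_le_tail:
  assumes "\<alpha> \<noteq> 2" "xi \<le> V" "s - \<eta> < -1" "xi \<le> x"
    and f_le: "\<And>v. V \<le> v \<Longrightarrow> f v \<le> 2 * C * v powr (- \<eta>)"
    and weight_le: "\<And>v. V \<le> v \<Longrightarrow> v powr (1 / (\<alpha> - 2)) \<le> v powr s"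
  shows "weighted_cdf \<alpha> x \<le> weighted_cdf \<alpha> V
           + \<bar>\<alpha> - 2\<bar> powr (1 / (\<alpha> - 2)) * (2 * C) / (\<eta> - s - 1) * V powr (s - \<eta> + 1)"
proof -
  define y where "y = max x V"
  have "weighted_cdf \<alpha> x \<le> weighted_cdf \<alpha> y"
    using assms by (intro weighted_cdf_mono) (auto simp: y_def)
  also have "\<dots> = weighted_cdf \<alpha> V + integral {V..y} (\<lambda>v. up_weight \<alpha> v * f v)"
    using assms by (intro weighted_cdf_split) (auto simp: y_def)
  also have "integral {V..y} (\<lambda>v. up_weight \<alpha> v * f v)
               \<le> \<bar>\<alpha> - 2\<bar> powr (1 / (\<alpha> - 2)) * (2 * C) / (- (s - \<eta>) - 1) * V powr (s - \<eta> + 1)"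
    using assms xi_pos C_pos
    by (intro integral_le_powr_tail weighted_density_integrable_on weighted_density_le) (auto simp: y_def)
  finally show ?thesis
    by (simp add: algebra_simps)
qed

lemma weighted_cdf_bounded:
  assumes "\<alpha> \<noteq> 2" "1 / (\<alpha> - 2) - \<eta> + 1 < 0"
  obtains B where "\<And>x. xi \<le> x \<Longrightarrow> weighted_cdf \<alpha> x \<le> B"
proof -
  obtain V0 where V0: "\<And>v. V0 \<le> v \<Longrightarrow> f v \<le> 2 * C * v powr (- \<eta>)"
    using eventually_density_le by (auto simp: eventually_at_top_linorder)
  show ?thesis
    using assms weighted_cdf_le_tail[of \<alpha> "max V0 xi" "1 / (\<alpha> - 2)"] V0
    by (intro that) auto
qed

lemma Up_support_compact:
  assumes "\<alpha> < 2 \<or> 2 + 1 / (\<eta> - 1) < \<alpha>"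
  shows "compact (closure {u. Up \<alpha> xi f u \<noteq> 0})"
proof -
  have "\<alpha> \<noteq> 2"
    using assms eta_gt_1 by auto
  moreover obtain B where "\<And>x. xi \<le> x \<Longrightarrow> weighted_cdf \<alpha> x \<le> B"
    using weighted_cdf_bounded[OF _ tail_exponent_neg[OF eta_gt_1 assms]] \<open>\<alpha> \<noteq> 2\<close>
    by blast
  ultimately have "{u. Up \<alpha> xi f u \<noteq> 0} \<subseteq> {-B..0}"
    by (rule Up_support_subset)
  then have "bounded {u. Up \<alpha> xi f u \<noteq> 0}"
    by (rule bounded_subset[rotated]) simp
  then show ?thesis
    by simp
qed

lemma weighted_cdf_le_uniform:
  assumes "2 < \<alpha>" "1 / (\<alpha> - 2) \<le> s" "s - \<eta> < -1" "1 \<le> V" "xi \<le> V" "xi \<le> x"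
    and f_le: "\<And>v. V \<le> v \<Longrightarrow> f v \<le> 2 * C * v powr (- \<eta>)"
  shows "weighted_cdf \<alpha> x \<le> up_weight \<alpha> V * integral {xi..} f
           + up_weight \<alpha> 1 * (2 * C / (\<eta> - s - 1) * V powr (s - \<eta> + 1))"
proof -
  have "v powr (1 / (\<alpha> - 2)) \<le> v powr s" if "V \<le> v" for v
    using that assms by (intro powr_mono) auto
  then have "weighted_cdf \<alpha> x \<le> weighted_cdf \<alpha> V + up_weight \<alpha> 1 * (2 * C / (\<eta> - s - 1) * V powr (s - \<eta> + 1))"
    using weighted_cdf_le_tail[of \<alpha> V s x] assms by (simp add: up_weight_def)
  also have "weighted_cdf \<alpha> V \<le> up_weight \<alpha> V * integral {xi..} f"
    using weighted_cdf_le_cdf[OF assms(1,5)] cdf_le[of V] up_weight_pos[of \<alpha> V] assms xi_pos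
    by (smt (verit, best) mult_left_mono)
  finally show ?thesis
    by simp
qed

lemma eventually_weighted_cdf_less:
  assumes "integral {xi..} f < b"
  shows "eventually (\<lambda>\<alpha>. \<forall>x\<ge>xi. weighted_cdf \<alpha> x < b) at_top"
proof -
  define m where "m = integral {xi..} f"
  \<comment> \<open>Any \<open>0 < s < \<eta> - 1\<close> works: \<open>v powr s\<close> dominates the weight once \<open>1 / (\<alpha> - 2) \<le> s\<close>,
    and \<open>v powr s * f v\<close> is still integrable at infinity.\<close>
  define s where "s = (\<eta> - 1) / 2"
  have s: "0 < s" "s - \<eta> < -1"
    using eta_gt_1 by (auto simp: s_def field_simps)
  define T where "T V = 2 * C / (\<eta> - s - 1) * V powr (s - \<eta> + 1)" for V
  have powr_lim: "((\<lambda>V. K * V powr q) \<longlongrightarrow> 0) at_top" if "q < 0" for K q :: real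
    using that by real_asymp
  have "(T \<longlongrightarrow> 0) at_top"
    unfolding T_def by (rule powr_lim) (use s in simp)
  moreover obtain V0 where V0: "\<And>v. V0 \<le> v \<Longrightarrow> f v \<le> 2 * C * v powr (- \<eta>)"
    using eventually_density_le by (auto simp: eventually_at_top_linorder)
  moreover have "0 < (b - m) / 2"
    using assms by (simp add: m_def)
  ultimately have "eventually (\<lambda>V. T V < (b - m) / 2) at_top"
    by (intro order_tendstoD(2))
  then have "eventually (\<lambda>V. T V < (b - m) / 2 \<and> max V0 (max xi 1) \<le> V) at_top"
    by (intro eventually_conj eventually_ge_at_top)
  then obtain V where V: "T V < (b - m) / 2" "V0 \<le> V" "xi \<le> V" "1 \<le> V"
    by (auto simp: eventually_at_top_linorder)
  have "((\<lambda>\<alpha>. up_weight \<alpha> V * m + up_weight \<alpha> 1 * T V) \<longlongrightarrow> 1 * m + 1 * T V) at_top"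
    using V by (intro tendsto_intros up_weight_tendsto_1) auto
  moreover have "1 * m + 1 * T V < b"
    using V(1) assms unfolding m_def by (simp add: field_simps)
  ultimately have "eventually (\<lambda>\<alpha>. up_weight \<alpha> V * m + up_weight \<alpha> 1 * T V < b) at_top"
    by (rule order_tendstoD(2))
  then show ?thesis
    using eventually_ge_at_top[of "2 + 1 / s"]
  proof eventually_elim
    case (elim \<alpha>)
    have "0 < 1 / s"
      using s by simp
    then have "2 < \<alpha>" "1 / s \<le> \<alpha> - 2"
      using elim(2) by linarith+
    then have "1 / (\<alpha> - 2) \<le> s"
      using s by (simp add: pos_divide_le_eq mult.commute)
    then show ?case
      using weighted_cdf_le_uniform[OF \<open>2 < \<alpha>\<close> _ s(2)] V V0 elim(1)
      unfolding T_def m_def by (smt (verit))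
  qed
qed

lemma Up_tendsto_indicator:
  assumes "u \<noteq> - integral {xi..} f"
  shows "((\<lambda>\<alpha>. Up \<alpha> xi f u) \<longlongrightarrow> indicator {- integral {xi..} f..0} u) at_top"
proof -
  consider "0 < u" | "- integral {xi..} f < u" "u \<le> 0" | "u < - integral {xi..} f"
    using assms by fastforce
  then show ?thesis
  proof cases
    case 1
    have "eventually (\<lambda>\<alpha>. Up \<alpha> xi f u = 0) at_top"
      using eventually_gt_at_top[of 2]
    proof eventually_elim
      case (elim \<alpha>)
      then have "\<alpha> \<noteq> 2" by simp
      then show ?case
        using 1 weighted_cdf_nonneg[OF \<open>\<alpha> \<noteq> 2\<close>] by (intro Up_eq_0) fastforce+
    qed
    then show ?thesis
      using 1 by (simp add: tendsto_eventually)
  next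
    case 2
    then show ?thesis
      using Up_tendsto_1 by simp
  next
    case 3
    then have "integral {xi..} f < - u"
      by simp
    have "eventually (\<lambda>\<alpha>. Up \<alpha> xi f u = 0) at_top"
      using eventually_weighted_cdf_less[OF \<open>integral {xi..} f < - u\<close>] eventually_gt_at_top[of 2]
    proof eventually_elim
      case (elim \<alpha>)
      then show ?case
        using 3 by (intro Up_eq_0) fastforce+
    qed
    then show ?thesis
      using 3 by (simp add: tendsto_eventually)
  qed
qed

lemma Up_asymp_subcritical:
  assumes "2 < \<alpha>" "\<alpha> < 2 + 1 / (\<eta> - 1)"
  shows "\<exists>K1>0. Up \<alpha> xi f \<sim>[at_bot] (\<lambda>u. \<bar>K1 * u\<bar> powr (1 / (\<eta> * (\<alpha> - 2) + 1 - \<alpha>)))"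
proof -
  define p where "p = 1 / (\<alpha> - 2) - \<eta> + 1"
  define k where "k = C * \<bar>\<alpha> - 2\<bar> powr (1 / (\<alpha> - 2)) / p"
  define e where "e = 1 / (\<eta> * (\<alpha> - 2) + 1 - \<alpha>)"
  define K1 where "K1 = ((\<alpha> - 2) powr (1 / (2 - \<alpha>)) * k powr (- e)) powr (1 / e)"
  have "\<alpha> \<noteq> 2" "0 < p"
    using tail_exponent_pos[OF eta_gt_1 assms] assms by (auto simp: p_def)
  then have "0 < k" "0 < K1"
    using C_pos assms by (simp_all add: k_def K1_def)
  have "\<eta> * (\<alpha> - 2) + 1 - \<alpha> = - p * (\<alpha> - 2)"
    using assms by (simp add: p_def field_simps)
  then have "e = - 1 / (p * (\<alpha> - 2))"
    by (simp add: e_def)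
  then have e: "1 / p * (1 / (2 - \<alpha>)) = e" "e \<noteq> 0"
    using \<open>0 < p\<close> assms by (auto simp: field_simps)
  have G: "weighted_cdf \<alpha> \<sim>[at_top] (\<lambda>x. k * x powr p)"
    using weighted_cdf_asymp_powr[OF \<open>\<alpha> \<noteq> 2\<close>] \<open>0 < p\<close>
    by (simp add: k_def p_def)
  have G_top: "filterlim (weighted_cdf \<alpha>) at_top at_top"
    using filterlim_weighted_cdf[OF \<open>\<alpha> \<noteq> 2\<close>] \<open>0 < p\<close>
    by (simp add: p_def)
  have "Up \<alpha> xi f \<sim>[at_bot] (\<lambda>u. ((\<alpha> - 2) * (- u / k) powr (1 / p)) powr (1 / (2 - \<alpha>)))"
    by (rule Up_asymp_powr[OF assms(1) \<open>0 < k\<close> \<open>0 < p\<close> G_top G])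
  also have "\<dots> \<sim>[at_bot] (\<lambda>u. \<bar>K1 * u\<bar> powr e)"
  proof (rule asymp_equiv_refl_ev)
    show "eventually (\<lambda>u. ((\<alpha> - 2) * (- u / k) powr (1 / p)) powr (1 / (2 - \<alpha>)) = \<bar>K1 * u\<bar> powr e) at_bot"
      using eventually_gt_at_bot[of 0]
    proof eventually_elim
      case (elim u)
      have "((\<alpha> - 2) * (- u / k) powr (1 / p)) powr (1 / (2 - \<alpha>))
              = (\<alpha> - 2) powr (1 / (2 - \<alpha>)) * (- u / k) powr e"
        using assms elim e by (simp add: powr_mult powr_powr)
      also have "\<dots> = (\<alpha> - 2) powr (1 / (2 - \<alpha>)) * k powr (- e) * (- u) powr e"
        using powr_divide[of "- u" k e] \<open>0 < k\<close> elim
        by (simp add: powr_minus divide_inverse)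
      also have "\<dots> = K1 powr e * (- u) powr e"
        using e \<open>0 < k\<close> assms by (simp add: K1_def powr_powr)
      also have "\<dots> = (K1 * (- u)) powr e"
        using powr_mult[of K1 "- u" e] \<open>0 < K1\<close> elim by simp
      also have "\<dots> = \<bar>K1 * u\<bar> powr e"
        using \<open>0 < K1\<close> elim by (simp add: abs_mult)
      finally show ?case .
    qed
  qed
  finally show ?thesis
    using \<open>0 < K1\<close> unfolding e_def by blast
qed

lemma Up_log_asymp_critical:
  "((\<lambda>u. ln (Up (2 + 1 / (\<eta> - 1)) xi f u) / u) \<longlongrightarrow> (\<eta> - 1) powr \<eta> / C) at_bot"
proof -
  define \<alpha> where "\<alpha> = 2 + 1 / (\<eta> - 1)"
  define c where "c = C * (\<eta> - 1) powr (1 - \<eta>)"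
  have \<delta>: "1 / (\<alpha> - 2) = \<eta> - 1" and "2 < \<alpha>" "\<alpha> \<noteq> 2"
    using eta_gt_1 by (simp_all add: \<alpha>_def)
  have "0 < c"
    using C_pos eta_gt_1 by (simp add: c_def)
  have "C * \<bar>\<alpha> - 2\<bar> powr (1 / (\<alpha> - 2)) = c"
    using eta_gt_1 by (simp add: \<delta> c_def \<alpha>_def powr_divide powr_diff)
  then have G: "weighted_cdf \<alpha> \<sim>[at_top] (\<lambda>x. c * ln x)"
    using weighted_cdf_asymp_ln[OF \<open>\<alpha> \<noteq> 2\<close>] \<delta> by simp
  have G_top: "filterlim (weighted_cdf \<alpha>) at_top at_top"
    using filterlim_weighted_cdf[OF \<open>\<alpha> \<noteq> 2\<close>] \<delta> by simp
  have "1 / ((\<alpha> - 2) * c) = (\<eta> - 1) powr \<eta> / C"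
    using eta_gt_1 C_pos by (simp add: \<alpha>_def c_def powr_diff field_simps)
  then show ?thesis
    using ln_Up_divide_tendsto[OF \<open>2 < \<alpha>\<close> \<open>0 < c\<close> G_top G]
    by (simp add: \<alpha>_def)
qed

end

theorem proposition5:
  fixes f :: "real \<Rightarrow> real" and xi C \<eta> :: real
  assumes xi_pos: "0 < xi"
    and f_pos: "\<And>x. xi \<le> x \<Longrightarrow> 0 < f x"
    and f_density: "(f has_integral 1) {xi..}"
    and eta: "1 < \<eta>" and C: "0 < C"
    and tail: "f \<sim>[at_top] (\<lambda>x. C * x powr (- \<eta>))"
  defines "\<alpha>c \<equiv> 2 + 1 / (\<eta> - 1)"
  shows "(\<forall>\<alpha>. 2 < \<alpha> \<and> \<alpha> < \<alpha>c \<longrightarrow>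
            \<not> bounded {u. Up \<alpha> xi f u \<noteq> 0} \<and>
            (\<exists>K1>0. Up \<alpha> xi f \<sim>[at_bot]
                (\<lambda>u. \<bar>K1 * u\<bar> powr (1 / (\<eta> * (\<alpha> - 2) + 1 - \<alpha>)))))
       \<and> (\<exists>r>0. ((\<lambda>u. ln (Up \<alpha>c xi f u) / u) \<longlongrightarrow> r) at_bot)
       \<and> (\<forall>\<alpha>. \<alpha> < 2 \<or> \<alpha>c < \<alpha> \<longrightarrow> compact (closure {u. Up \<alpha> xi f u \<noteq> 0}))
       \<and> (\<forall>u. u \<noteq> -1 \<longrightarrow>
            ((\<lambda>\<alpha>. Up \<alpha> xi f u) \<longlongrightarrow> indicator {-1..0} u) at_top)"
proof -
  interpret power_tail_density f xi C \<eta>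
    by unfold_locales (use xi_pos f_pos f_density eta C tail in auto)
  have total_mass: "integral {xi..} f = 1"
    using f_density by (rule integral_unique)
  show ?thesis
    unfolding \<alpha>c_def
  proof (intro conjI allI impI)
    fix \<alpha> assume \<alpha>: "2 < \<alpha> \<and> \<alpha> < 2 + 1 / (\<eta> - 1)"
    then have "filterlim (weighted_cdf \<alpha>) at_top at_top"
      using tail_exponent_pos[OF eta] by (intro filterlim_weighted_cdf less_imp_le) auto
    then show "\<not> bounded {u. Up \<alpha> xi f u \<noteq> 0}"
      using \<alpha> by (intro Up_support_unbounded) auto
    show "\<exists>K1>0. Up \<alpha> xi f \<sim>[at_bot] (\<lambda>u. \<bar>K1 * u\<bar> powr (1 / (\<eta> * (\<alpha> - 2) + 1 - \<alpha>)))"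
      using \<alpha> by (intro Up_asymp_subcritical) auto
  next
    show "\<exists>r>0. ((\<lambda>u. ln (Up (2 + 1 / (\<eta> - 1)) xi f u) / u) \<longlongrightarrow> r) at_bot"
      using Up_log_asymp_critical eta C by (intro exI[of _ "(\<eta> - 1) powr \<eta> / C"]) auto
  next
    fix \<alpha> assume "\<alpha> < 2 \<or> 2 + 1 / (\<eta> - 1) < \<alpha>"
    then show "compact (closure {u. Up \<alpha> xi f u \<noteq> 0})"
      by (rule Up_support_compact)
  next
    fix u :: real assume "u \<noteq> -1"
    then show "((\<lambda>\<alpha>. Up \<alpha> xi f u) \<longlongrightarrow> indicator {-1..0} u) at_top"
      using Up_tendsto_indicator[of u] total_mass by simp
  qed
qed

end
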